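(* Let $\alpha,\beta,p,q\in\mathbb{C}$ be constants with $p^2\neq q^2$, and set $s^2=\alpha^2-p^2$, $\mu^2=\alpha^2-q^2$, $t^2=\beta^2-p^2$, $\nu^2=\beta^2-q^2$. Let $h,g:\mathbb{Z}^2\to\mathbb{C}$ satisfy $\widehat{h}-\widetilde{h}=\widetilde{\widetilde{g}}-g$ and $(h+\widetilde g)g=\beta^2-\alpha^2$. Let $\varphi$ solve $$\widetilde{\widetilde{\varphi}}+h\,\widetilde{\varphi}+\alpha^2\varphi=p^2\varphi,\qquad \widehat{\varphi}=\widetilde{\varphi}-g\,\varphi,$$ and $\phi$ solve $$\widetilde{\widetilde{\phi}}+h\,\widetilde{\phi}+\alpha^2\phi=q^2\phi,\qquad \widehat{\phi}=\widetilde{\phi}-g\,\phi .$$ Then $y=\varphi\widetilde{\phi}-\phi\widetilde{\varphi}$ solves the leKdV-II equation $$s^2\mu^2\,y\widehat{y}+\widetilde{y}\,\widehat{\widetilde{y}}-t^2\nu^2\,y\widetilde{y}-\widehat{y}\,\widehat{\widetilde{y}}-(\alpha^2-\beta^2)\big(y\,\widehat{\widetilde{y}}+\widetilde{y}\,\widehat{y}\big)=0 .$$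
   Context: Shift notation: for a function $f$ on $\mathbb{Z}^2$ (variables $n,m$), $\widetilde f(n,m)=f(n+1,m)$, $\widehat f(n,m)=f(n,m+1)$, and combined accents denote composed shifts. *)

theory Defs
  imports Complex_Main
begin

text \<open>Functions on Z^2 are modelled as int => int => complex; f n m.
  Tilde shift: n+1; hat shift: m+1.\<close>

end

theory Submission
  imports Defs
begin

text \<open>The Casoratian \<open>y\<close> of two solutions of the Lax pair is determined on each elementary
  quadrilateral by the values of \<open>\<phi>1, \<phi>1~, \<phi>2, \<phi>2~\<close> at one vertex: the spatial equation gives
  \<open>y~ = s\<^sup>2 \<phi>1 \<phi>2~ - \<mu>\<^sup>2 \<phi>2 \<phi>1~\<close>, and the temporal equation expresses the hatted values through
  \<open>g\<close> and \<open>h + g~\<close>. Eliminating \<open>\<beta>\<^sup>2\<close> by \<open>(h + g~) g = \<beta>\<^sup>2 - \<alpha>\<^sup>2\<close>, the leKdV-II equation becomes a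
  polynomial identity.\<close>

definition lax_solution ::
    "(int \<Rightarrow> int \<Rightarrow> 'a::comm_ring) \<Rightarrow> (int \<Rightarrow> int \<Rightarrow> 'a) \<Rightarrow> 'a \<Rightarrow> 'a \<Rightarrow> (int \<Rightarrow> int \<Rightarrow> 'a) \<Rightarrow> bool"
  where "lax_solution h g A P \<phi> \<longleftrightarrow>
    (\<forall>n m. \<phi> (n+2) m + h n m * \<phi> (n+1) m + A * \<phi> n m = P * \<phi> n m) \<and>
    (\<forall>n m. \<phi> n (m+1) = \<phi> (n+1) m - g n m * \<phi> n m)"

definition casoratian :: "(int \<Rightarrow> int \<Rightarrow> 'a::comm_ring) \<Rightarrow> (int \<Rightarrow> int \<Rightarrow> 'a) \<Rightarrow> int \<Rightarrow> int \<Rightarrow> 'a"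
  where "casoratian \<phi> \<psi> n m = \<phi> n m * \<psi> (n+1) m - \<psi> n m * \<phi> (n+1) m"

lemma lax_solution_tilde_tilde:
  assumes "lax_solution h g A P \<phi>"
  shows "\<phi> (n+1+1) m = (P - A) * \<phi> n m - h n m * \<phi> (n+1) m"
proof -
  have "\<phi> (n+2) m + h n m * \<phi> (n+1) m + A * \<phi> n m = P * \<phi> n m"
    using assms unfolding lax_solution_def by blast
  then show ?thesis
    by (simp add: algebra_simps eq_diff_eq)
qed

lemma lax_solution_hat:
  assumes "lax_solution h g A P \<phi>"
  shows "\<phi> n (m+1) = \<phi> (n+1) m - g n m * \<phi> n m"
  using assms unfolding lax_solution_def by blast

lemma lax_solution_hat_tilde:
  assumes "lax_solution h g A P \<phi>"
  shows "\<phi> (n+1) (m+1) = (P - A) * \<phi> n m - (h n m + g (n+1) m) * \<phi> (n+1) m"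
  unfolding lax_solution_hat[OF assms, of "n+1"] lax_solution_tilde_tilde[OF assms]
  by (simp add: algebra_simps)

lemma casoratian_tilde:
  assumes "lax_solution h g A P \<phi>" and "lax_solution h g A Q \<psi>"
  shows "casoratian \<phi> \<psi> (n+1) m = (A - P) * \<phi> n m * \<psi> (n+1) m - (A - Q) * \<psi> n m * \<phi> (n+1) m"
  unfolding casoratian_def lax_solution_tilde_tilde[OF assms(1)] lax_solution_tilde_tilde[OF assms(2)]
  by (simp add: algebra_simps)

text \<open>The leKdV-II equation on one quadrilateral, with \<open>A = \<alpha>\<^sup>2\<close>, \<open>B = \<beta>\<^sup>2\<close>, \<open>P = p\<^sup>2\<close>, \<open>Q = q\<^sup>2\<close>,
  \<open>G = g\<close> and \<open>H = h + g~\<close>; the primed values are the hatted ones.\<close>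

lemma leKdV_II_quadrilateral_identity:
  fixes A B P Q G H u0 u1 v0 v1 u0' u1' v0' v1' :: "'a::idom"
  assumes "B = A + H * G"
    and "u0' = u1 - G * u0" and "u1' = (P - A) * u0 - H * u1"
    and "v0' = v1 - G * v0" and "v1' = (Q - A) * v0 - H * v1"
    and "y = u0 * v1 - v0 * u1" and "y\<^sub>t = (A - P) * u0 * v1 - (A - Q) * v0 * u1"
    and "y\<^sub>h = u0' * v1' - v0' * u1'" and "y\<^sub>t\<^sub>h = (A - P) * u0' * v1' - (A - Q) * v0' * u1'"
  shows "(A - P) * (A - Q) * y * y\<^sub>h + y\<^sub>t * y\<^sub>t\<^sub>h - (B - P) * (B - Q) * y * y\<^sub>t - y\<^sub>h * y\<^sub>t\<^sub>h
           - (A - B) * (y * y\<^sub>t\<^sub>h + y\<^sub>t * y\<^sub>h) = 0"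
  unfolding assms by algebra

theorem proposition4p1:
  fixes \<alpha> \<beta> p q :: complex
    and h g \<phi>1 \<phi>2 :: "int \<Rightarrow> int \<Rightarrow> complex"
  assumes pq: "p^2 \<noteq> q^2"
    and hg1: "\<And>n m. h n (m+1) - h (n+1) m = g (n+2) m - g n m"
    and hg2: "\<And>n m. (h n m + g (n+1) m) * g n m = \<beta>^2 - \<alpha>^2"
    and L1: "\<And>n m. \<phi>1 (n+2) m + h n m * \<phi>1 (n+1) m + \<alpha>^2 * \<phi>1 n m = p^2 * \<phi>1 n m"
    and M1: "\<And>n m. \<phi>1 n (m+1) = \<phi>1 (n+1) m - g n m * \<phi>1 n m"
    and L2: "\<And>n m. \<phi>2 (n+2) m + h n m * \<phi>2 (n+1) m + \<alpha>^2 * \<phi>2 n m = q^2 * \<phi>2 n m"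
    and M2: "\<And>n m. \<phi>2 n (m+1) = \<phi>2 (n+1) m - g n m * \<phi>2 n m"
  shows "let y = (\<lambda>n m. \<phi>1 n m * \<phi>2 (n+1) m - \<phi>2 n m * \<phi>1 (n+1) m);
             s2 = \<alpha>^2 - p^2; \<mu>2 = \<alpha>^2 - q^2; t2 = \<beta>^2 - p^2; \<nu>2 = \<beta>^2 - q^2
         in \<forall>n m. s2 * \<mu>2 * y n m * y n (m+1) + y (n+1) m * y (n+1) (m+1)
                  - t2 * \<nu>2 * y n m * y (n+1) m - y n (m+1) * y (n+1) (m+1)
                  - (\<alpha>^2 - \<beta>^2) * (y n m * y (n+1) (m+1) + y (n+1) m * y n (m+1)) = 0"
proof -
  have \<phi>1: "lax_solution h g (\<alpha>^2) (p^2) \<phi>1" and \<phi>2: "lax_solution h g (\<alpha>^2) (q^2) \<phi>2"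
    using L1 M1 L2 M2 unfolding lax_solution_def by blast+
  define y where "y = casoratian \<phi>1 \<phi>2"
  have quadrilateral: "(\<alpha>^2 - p^2) * (\<alpha>^2 - q^2) * y n m * y n (m+1) + y (n+1) m * y (n+1) (m+1)
      - (\<beta>^2 - p^2) * (\<beta>^2 - q^2) * y n m * y (n+1) m - y n (m+1) * y (n+1) (m+1)
      - (\<alpha>^2 - \<beta>^2) * (y n m * y (n+1) (m+1) + y (n+1) m * y n (m+1)) = 0" for n m
  proof -
    have "\<beta>^2 = \<alpha>^2 + (h n m + g (n+1) m) * g n m"
      using hg2[of n m] by (simp add: algebra_simps)
    from leKdV_II_quadrilateral_identity[OF this
        lax_solution_hat[OF \<phi>1, of n m] lax_solution_hat_tilde[OF \<phi>1, of n m]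
        lax_solution_hat[OF \<phi>2, of n m] lax_solution_hat_tilde[OF \<phi>2, of n m]
        casoratian_def[of \<phi>1 \<phi>2 n m] casoratian_tilde[OF \<phi>1 \<phi>2, of n m]
        casoratian_def[of \<phi>1 \<phi>2 n "m+1"] casoratian_tilde[OF \<phi>1 \<phi>2, of n "m+1"]]
    show ?thesis unfolding y_def .
  qed
  have y_eq: "(\<lambda>n m. \<phi>1 n m * \<phi>2 (n+1) m - \<phi>2 n m * \<phi>1 (n+1) m) = y"
    by (simp add: y_def fun_eq_iff casoratian_def)
  show ?thesis
    using quadrilateral by (simp only: Let_def y_eq simp_thms)
qed

end
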